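(* Let $L$ be an infinite set and consider the edgeless cube $Q_L$. In every legal configuration accessible from $f_{\mathrm{solved}}$, every non-center cluster contains exactly four cells of each of the six colors.
   Context: Let $L$ be an infinite set, $-L=\{-r:r\in L\}$ a disjoint copy of $L$, and $0$ a new element; $L^\dagger=-L\cup\{0\}\cup L$ with $-(-r)=r$, $-0=0$. Adjoin $\pm\infty$ with $-(+\infty)=-\infty$ and set $\bar L^\dagger=L^\dagger\cup\{\pm\infty\}$. Points of $U=(\bar L^\dagger)^3$ have coordinates $x,y,z$. The edgeless cube $Q_L$ is the set of cells: points of $U$ with exactly one coordinate in $\{\pm\infty\}$. For $i\in\{x,y,z\}$, $\alpha\in\bar L^\dagger$, the quarter-turn twist $T_{i,\alpha}$ is the permutation of cells fixing every cell $p$ with $p_i\ne\alpha$ and acting on the others by $T_{x,\alpha}(\alpha,y,z)=(\alpha,-z,y)$, $T_{y,\alpha}(x,\alpha,z)=(z,\alpha,-x)$, $T_{z,\alpha}(x,y,\alpha)=(-y,x,\alpha)$. Basic twists are $T,T^2,T^3$ for quarter-turn twists $T$. A basic sequence is a sequence $\langle\sigma_\eta:\eta<\theta\rangle$ of basic twists of ordinal length $\theta$. A configuration is a map $f$ from cells to the six colors red, white, green, orange, yellow, blue together with a special value NaC; it is legal if it never takes value NaC. The solved configuration $f_{\mathrm{solved}}$ colors a cell red, blue, white, orange, green, yellow according as $x=+\infty$, $y=+\infty$, $z=+\infty$, $x=-\infty$, $y=-\infty$, $z=-\infty$. A twist $\sigma$ acts by $(\sigma f)(c)=f(\sigma^{-1}c)$.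 Applying $\langle\sigma_\eta:\eta<\theta\rangle$ to $f_0$ produces $f_{\eta+1}=\sigma_\eta f_\eta$, and for limit $\lambda\le\theta$, $f_\lambda(c)$ is the eventually constant value of $f_\eta(c)$ ($\eta<\lambda$) if it exists and NaC otherwise; $f_\theta$ is the terminal configuration. $f$ is accessible from $f_0$ if it is the terminal configuration of some basic sequence applied to $f_0$. The cluster of a cell is its orbit under the group generated by all quarter-turn twists; the six center cells (two coordinates equal to $0$) form the center cluster, and all other clusters (non-center) have 24 cells. *)

theory Defs
  imports Main
begin

(* Elements of \<bar>L\<dagger> = -L \<union> {0} \<union> L \<union> {+inf,-inf}, where L is the type 'a *)
datatype 'a coord = Neg 'a | Zero | Pos 'a | PInf | MInf

fun neg :: "'a coord \<Rightarrow> 'a coord" where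
  "neg (Neg r) = Pos r"
| "neg (Pos r) = Neg r"
| "neg Zero = Zero"
| "neg PInf = MInf"
| "neg MInf = PInf"

type_synonym 'a point = "'a coord \<times> 'a coord \<times> 'a coord"

definition is_inf :: "'a coord \<Rightarrow> bool" where
  "is_inf a \<longleftrightarrow> a = PInf \<or> a = MInf"

definition cells :: "'a point set" where
  "cells = {(x, y, z). (is_inf x \<and> \<not> is_inf y \<and> \<not> is_inf z)
                      \<or> (\<not> is_inf x \<and> is_inf y \<and> \<not> is_inf z)
                      \<or> (\<not> is_inf x \<and> \<not> is_inf y \<and> is_inf z)}"

datatype axis = AX | AY | AZ

(* quarter-turn twist T_{i,alpha} (acting on all points; it permutes the cells) *)
fun qturn :: "axis \<Rightarrow> 'a coord \<Rightarrow> 'a point \<Rightarrow> 'a point" where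
  "qturn AX \<alpha> (x, y, z) = (if x = \<alpha> then (x, neg z, y) else (x, y, z))"
| "qturn AY \<alpha> (x, y, z) = (if y = \<alpha> then (z, y, neg x) else (x, y, z))"
| "qturn AZ \<alpha> (x, y, z) = (if z = \<alpha> then (neg y, x, z) else (x, y, z))"

definition basic_twists :: "('a point \<Rightarrow> 'a point) set" where
  "basic_twists = {qturn i \<alpha> ^^ k | i \<alpha> k. k \<in> {1, 2, 3}}"

datatype color = Red | White | Green | Orange | Yellow | Blue

(* a configuration; None plays the role of NaC *)
type_synonym 'a config = "'a point \<Rightarrow> color option"

definition legal :: "'a config \<Rightarrow> bool" where
  "legal f \<longleftrightarrow> (\<forall>c\<in>cells. f c \<noteq> None)"

definition f_solved :: "'a config" where
  "f_solved = (\<lambda>(x, y, z).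
     if x = PInf then Some Red else if y = PInf then Some Blue
     else if z = PInf then Some White else if x = MInf then Some Orange
     else if y = MInf then Some Green else if z = MInf then Some Yellow
     else None)"

definition act :: "('a point \<Rightarrow> 'a point) \<Rightarrow> 'a config \<Rightarrow> 'a config" where
  "act \<sigma> f = (\<lambda>c. f (inv \<sigma> c))"

(* An ordinal length theta is represented by an element \<theta> of a
   well-ordered type 'o: the indices eta < theta are the elements of 'o below \<theta>,
   and F eta is the configuration f_eta for eta \<le> theta. *)
definition is_run :: "'a config \<Rightarrow> ('o::wellorder \<Rightarrow> 'a point \<Rightarrow> 'a point) \<Rightarrow> 'o
                      \<Rightarrow> ('o \<Rightarrow> 'a config) \<Rightarrow> bool" where
  "is_run f0 \<sigma> \<theta> F \<longleftrightarrow>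
     (\<forall>\<eta><\<theta>. \<sigma> \<eta> \<in> basic_twists)
   \<and> (\<forall>\<eta>\<le>\<theta>. (\<forall>\<xi>. \<not> \<xi> < \<eta>) \<longrightarrow> F \<eta> = f0)
   \<and> (\<forall>\<xi> \<eta>. \<xi> < \<eta> \<and> \<eta> \<le> \<theta> \<and> (\<forall>\<zeta>. \<not> (\<xi> < \<zeta> \<and> \<zeta> < \<eta>))
              \<longrightarrow> F \<eta> = act (\<sigma> \<xi>) (F \<xi>))
   \<and> (\<forall>\<eta>\<le>\<theta>. (\<exists>\<xi>. \<xi> < \<eta>) \<and> (\<forall>\<xi><\<eta>. \<exists>\<zeta>. \<xi> < \<zeta> \<and> \<zeta> < \<eta>) \<longrightarrow>
        (\<forall>c. F \<eta> c =
           (if \<exists>v. \<exists>\<xi><\<eta>. \<forall>\<zeta>. \<xi> \<le> \<zeta> \<and> \<zeta> < \<eta> \<longrightarrow> F \<zeta> c = v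
            then (THE v. \<exists>\<xi><\<eta>. \<forall>\<zeta>. \<xi> \<le> \<zeta> \<and> \<zeta> < \<eta> \<longrightarrow> F \<zeta> c = v)
            else None)))"

definition accessible_via :: "('o::wellorder \<Rightarrow> 'a point \<Rightarrow> 'a point) \<Rightarrow> 'o
                              \<Rightarrow> 'a config \<Rightarrow> 'a config \<Rightarrow> bool" where
  "accessible_via \<sigma> \<theta> f0 f \<longleftrightarrow> (\<exists>F. is_run f0 \<sigma> \<theta> F \<and> (\<forall>c\<in>cells. F \<theta> c = f c))"

inductive_set cluster :: "'a point \<Rightarrow> 'a point set" for c where
  base: "c \<in> cluster c"
| step: "d \<in> cluster c \<Longrightarrow> qturn i \<alpha> d \<in> cluster c"
| step_inv: "d \<in> cluster c \<Longrightarrow> inv (qturn i \<alpha>) d \<in> cluster c"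

definition center_cell :: "'a point \<Rightarrow> bool" where
  "center_cell c \<longleftrightarrow> (case c of (x, y, z) \<Rightarrow>
      (x = Zero \<and> y = Zero) \<or> (x = Zero \<and> z = Zero) \<or> (y = Zero \<and> z = Zero))"

end

theory Submission
  imports Defs
begin

(* Every quarter-turn twist moves a cell either by the global quarter rotation of the cube about
   its axis or not at all, so the cluster of a cell is its orbit under the 24 rotations of the
   cube; for a non-center cell these give 24 distinct cells, four of each colour in the solved
   configuration. A twist permutes every cluster, so it preserves the number of cells of a given
   colour in it; at a limit stage the finitely many cells of a given colour of a cluster all had
   that colour from some common earlier stage on. By transfinite induction no cluster ever holds
   more than four cells of one colour, and in a legal configuration the 24 cells of a cluster,
   shared among six colours, must then be exactly four of each. *)

lemma neg_neg [simp]: "neg (neg a) = a"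
  by (cases a) auto

lemma neg_eq_iff [simp]:
  "neg a = neg b \<longleftrightarrow> a = b"
  "neg a = PInf \<longleftrightarrow> a = MInf" "neg a = MInf \<longleftrightarrow> a = PInf" "neg a = Zero \<longleftrightarrow> a = Zero"
  "PInf = neg a \<longleftrightarrow> a = MInf" "MInf = neg a \<longleftrightarrow> a = PInf" "Zero = neg a \<longleftrightarrow> a = Zero"
  "neg a = a \<longleftrightarrow> a = Zero" "a = neg a \<longleftrightarrow> a = Zero"
  by (metis neg_neg) (cases a; auto)+

fun rot :: "axis \<Rightarrow> 'a point \<Rightarrow> 'a point" where
  "rot AX (x, y, z) = (x, neg z, y)"
| "rot AY (x, y, z) = (z, y, neg x)"
| "rot AZ (x, y, z) = (neg y, x, z)"

fun coord_of :: "axis \<Rightarrow> 'a point \<Rightarrow> 'a coord" where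
  "coord_of AX (x, y, z) = x"
| "coord_of AY (x, y, z) = y"
| "coord_of AZ (x, y, z) = z"

lemma qturn_eq_rot: "qturn i \<alpha> p = (if coord_of i p = \<alpha> then rot i p else p)"
  by (cases i; cases p) auto

lemma coord_of_rot [simp]: "coord_of i (rot i p) = coord_of i p"
  by (cases i; cases p) auto

lemma rot_rot_rot_rot [simp]: "rot i (rot i (rot i (rot i p))) = p"
  by (cases i; cases p) auto

lemma rot_in_cells_iff [simp]: "rot i p \<in> cells \<longleftrightarrow> p \<in> cells"
  by (cases i; cases p) (auto simp: cells_def is_inf_def)

lemma inj_qturn: "inj (qturn i \<alpha>)"
proof (rule injI)
  fix p q
  assume "qturn i \<alpha> p = qturn i \<alpha> q"
  then show "p = q"
    by (cases i; cases p; cases q) (auto split: if_splits)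
qed

lemma inv_qturn:
  "inv (qturn i \<alpha>) p = (if coord_of i p = \<alpha> then rot i (rot i (rot i p)) else p)"
  by (rule inv_f_eq[OF inj_qturn]) (simp add: qturn_eq_rot)

definition rotate :: "axis list \<Rightarrow> 'a point \<Rightarrow> 'a point" where
  "rotate w = foldr rot w"

(* one word in rot AX, rot AY, rot AZ for each of the 24 rotations of the cube *)
definition cube_rotations :: "axis list list" where
  "cube_rotations =
     [[], [AX], [AY], [AZ], [AX, AX], [AY, AX], [AZ, AX], [AY, AY], [AZ, AY], [AX, AZ], [AZ, AZ],
      [AX, AX, AX], [AY, AX, AX], [AZ, AX, AX], [AY, AY, AX], [AX, AZ, AX], [AZ, AZ, AX],
      [AY, AY, AY], [AZ, AY, AY], [AZ, AZ, AZ], [AZ, AX, AX, AX], [AX, AZ, AX, AX],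
      [AZ, AY, AY, AX], [AZ, AZ, AZ, AX]]"

definition rotation_orbit :: "'a point \<Rightarrow> 'a point list" where
  "rotation_orbit c = map (\<lambda>w. rotate w c) cube_rotations"

lemma self_in_rotation_orbit: "c \<in> set (rotation_orbit c)"
  by (simp add: rotation_orbit_def cube_rotations_def rotate_def)

lemma rot_in_rotation_orbit:
  assumes "p \<in> set (rotation_orbit c)"
  shows "rot i p \<in> set (rotation_orbit c)"
proof -
  have "\<forall>p\<in>set (rotation_orbit (x, y, z)). rot i p \<in> set (rotation_orbit (x, y, z))" for x y z
    by (cases i) (simp_all add: rotation_orbit_def cube_rotations_def rotate_def)
  then show ?thesis
    using assms by (cases c) blast
qed

(* rot i d is the twist qturn i (coord_of i d) applied to d *)
lemma rot_in_cluster: "d \<in> cluster c \<Longrightarrow> rot i d \<in> cluster c"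
  using cluster.step[of d c i "coord_of i d"] by (simp add: qturn_eq_rot)

lemma cluster_eq_rotation_orbit: "cluster c = set (rotation_orbit c)"
proof
  show "cluster c \<subseteq> set (rotation_orbit c)"
  proof
    fix d
    assume "d \<in> cluster c"
    then show "d \<in> set (rotation_orbit c)"
      by induction
        (auto simp: self_in_rotation_orbit qturn_eq_rot inv_qturn intro: rot_in_rotation_orbit)
  qed
  have "rotate w c \<in> cluster c" for w
    by (induction w) (auto simp: rotate_def intro: cluster.base rot_in_cluster)
  then show "set (rotation_orbit c) \<subseteq> cluster c"
    by (auto simp: rotation_orbit_def)
qed

lemma finite_cluster: "finite (cluster c)"
  by (simp add: cluster_eq_rotation_orbit)

lemma cluster_subset_cells: "c \<in> cells \<Longrightarrow> cluster c \<subseteq> cells"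
proof -
  assume "c \<in> cells"
  then have "rotate w c \<in> cells" for w
    by (induction w) (auto simp: rotate_def)
  then show ?thesis
    by (auto simp: cluster_eq_rotation_orbit rotation_orbit_def)
qed

lemma qturn_image_cluster: "qturn i \<alpha> ` cluster c \<subseteq> cluster c"
  by (auto intro: cluster.step)

lemma non_center_cell_cases:
  assumes "c \<in> cells" "\<not> center_cell c"
  obtains (xp) y z where "c = (PInf, y, z)" "\<not> is_inf y" "\<not> is_inf z" "y \<noteq> Zero \<or> z \<noteq> Zero"
  | (xm) y z where "c = (MInf, y, z)" "\<not> is_inf y" "\<not> is_inf z" "y \<noteq> Zero \<or> z \<noteq> Zero"
  | (yp) x z where "c = (x, PInf, z)" "\<not> is_inf x" "\<not> is_inf z" "x \<noteq> Zero \<or> z \<noteq> Zero"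
  | (ym) x z where "c = (x, MInf, z)" "\<not> is_inf x" "\<not> is_inf z" "x \<noteq> Zero \<or> z \<noteq> Zero"
  | (zp) x y where "c = (x, y, PInf)" "\<not> is_inf x" "\<not> is_inf y" "x \<noteq> Zero \<or> y \<noteq> Zero"
  | (zm) x y where "c = (x, y, MInf)" "\<not> is_inf x" "\<not> is_inf y" "x \<noteq> Zero \<or> y \<noteq> Zero"
  using assms unfolding cells_def center_cell_def is_inf_def
  by (cases c) auto

lemma distinct_rotation_orbit:
  assumes "c \<in> cells" "\<not> center_cell c"
  shows "distinct (rotation_orbit c)"
  using assms
  by (cases rule: non_center_cell_cases; auto simp: rotation_orbit_def cube_rotations_def rotate_def is_inf_def)

lemma card_cluster:
  assumes "c \<in> cells" "\<not> center_cell c"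
  shows "card (cluster c) = 24"
  using distinct_card[OF distinct_rotation_orbit[OF assms]]
  by (simp add: cluster_eq_rotation_orbit rotation_orbit_def cube_rotations_def)

definition color_count :: "'p set \<Rightarrow> ('p \<Rightarrow> color option) \<Rightarrow> color \<Rightarrow> nat" where
  "color_count C f col = card {d \<in> C. f d = Some col}"

lemma color_count_solved_le:
  assumes "c \<in> cells" "\<not> center_cell c"
  shows "color_count (cluster c) f_solved col \<le> 4"
proof -
  let ?P = "\<lambda>d. f_solved d = Some col"
  have "color_count (cluster c) f_solved col = card (set (filter ?P (rotation_orbit c)))"
    by (auto simp: color_count_def cluster_eq_rotation_orbit intro: arg_cong[where f = card])
  also have "\<dots> \<le> length (filter ?P (rotation_orbit c))"
    by (rule card_length)
  also have "\<dots> \<le> 4"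
    using assms
    by (cases rule: non_center_cell_cases; cases col)
      (simp_all add: rotation_orbit_def cube_rotations_def rotate_def is_inf_def f_solved_def)
  finally show ?thesis .
qed

lemma UNIV_color: "(UNIV :: color set) = {Red, White, Green, Orange, Yellow, Blue}"
  using color.exhaust by auto

lemma finite_UNIV_color: "finite (UNIV :: color set)"
  by (simp add: UNIV_color)

lemma card_eq_sum_color_count:
  assumes "finite C" "\<forall>d\<in>C. f d \<noteq> None"
  shows "card C = (\<Sum>col\<in>UNIV. color_count C f col)"
proof -
  have "C = (\<Union>col\<in>UNIV. {d \<in> C. f d = Some col})"
    using assms(2) by auto
  also have "card \<dots> = (\<Sum>col\<in>UNIV. card {d \<in> C. f d = Some col})"
    by (rule card_UN_disjoint) (auto simp: UNIV_color assms(1))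
  finally show ?thesis
    by (simp add: color_count_def)
qed

lemma color_count_act:
  assumes "inj \<tau>" "\<tau> ` C = C"
  shows "color_count C (act \<tau> f) col = color_count C f col"
proof -
  have "{d \<in> C. act \<tau> f d = Some col} = \<tau> ` {e \<in> C. f e = Some col}"
  proof (intro equalityI subsetI)
    fix d
    assume d: "d \<in> {d \<in> C. act \<tau> f d = Some col}"
    then obtain e where "e \<in> C" "d = \<tau> e"
      using assms(2) by blast
    with d show "d \<in> \<tau> ` {e \<in> C. f e = Some col}"
      using assms(1) by (auto simp: act_def inv_f_f)
  qed (use assms in \<open>auto simp: act_def inv_f_f\<close>)
  then show ?thesis
    unfolding color_count_def by (simp add: card_image inj_on_subset[OF assms(1)])
qed

lemma funpow_image_eq: "f ` C = C \<Longrightarrow> (f ^^ k) ` C = C"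
proof (induction k)
  case (Suc k)
  have "(f ^^ Suc k) ` C = f ` (f ^^ k) ` C"
    by (simp add: image_comp)
  with Suc show ?case
    by simp
qed simp

lemma basic_twist_permutes:
  assumes "\<tau> \<in> basic_twists" "finite C" "\<And>i \<alpha>. qturn i \<alpha> ` C \<subseteq> C"
  shows "inj \<tau>" "\<tau> ` C = C"
proof -
  obtain i \<alpha> k where \<tau>: "\<tau> = qturn i \<alpha> ^^ k"
    using assms(1) by (auto simp: basic_twists_def)
  show "inj \<tau>"
    unfolding \<tau> by (rule inj_fn[OF inj_qturn])
  have "qturn i \<alpha> ` C = C"
    by (rule endo_inj_surj[OF assms(2,3)]) (rule inj_on_subset[OF inj_qturn], simp)
  then show "\<tau> ` C = C"
    unfolding \<tau> by (rule funpow_image_eq)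
qed

definition eventually_below :: "'o::linorder \<Rightarrow> ('o \<Rightarrow> bool) \<Rightarrow> bool" where
  "eventually_below \<eta> P \<longleftrightarrow> (\<exists>\<xi><\<eta>. \<forall>\<zeta>. \<xi> \<le> \<zeta> \<and> \<zeta> < \<eta> \<longrightarrow> P \<zeta>)"

definition limit_value :: "('o::linorder \<Rightarrow> 'b option) \<Rightarrow> 'o \<Rightarrow> 'b option" where
  "limit_value g \<eta> =
     (if \<exists>v. eventually_below \<eta> (\<lambda>\<zeta>. g \<zeta> = v) then THE v. eventually_below \<eta> (\<lambda>\<zeta>. g \<zeta> = v)
      else None)"

lemma eventually_below_conj:
  assumes "eventually_below \<eta> P" "eventually_below \<eta> Q"
  shows "eventually_below \<eta> (\<lambda>\<zeta>. P \<zeta> \<and> Q \<zeta>)"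
proof -
  obtain \<xi>P \<xi>Q where "\<xi>P < \<eta>" "\<forall>\<zeta>. \<xi>P \<le> \<zeta> \<and> \<zeta> < \<eta> \<longrightarrow> P \<zeta>"
    and "\<xi>Q < \<eta>" "\<forall>\<zeta>. \<xi>Q \<le> \<zeta> \<and> \<zeta> < \<eta> \<longrightarrow> Q \<zeta>"
    using assms by (auto simp: eventually_below_def)
  then show ?thesis
    unfolding eventually_below_def by (intro exI[of _ "max \<xi>P \<xi>Q"]) auto
qed

lemma eventually_below_ball_finite:
  assumes "finite S" "\<xi> < \<eta>" "\<forall>d\<in>S. eventually_below \<eta> (P d)"
  shows "eventually_below \<eta> (\<lambda>\<zeta>. \<forall>d\<in>S. P d \<zeta>)"
  using assms(1,3)
proof (induction S rule: finite_induct)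
  case empty
  show ?case
    using assms(2) by (auto simp: eventually_below_def)
next
  case (insert d S)
  then have "eventually_below \<eta> (\<lambda>\<zeta>. P d \<zeta> \<and> (\<forall>d\<in>S. P d \<zeta>))"
    by (intro eventually_below_conj) auto
  then show ?case
    by simp
qed

lemma limit_value_eq_Some:
  assumes "limit_value g \<eta> = Some v"
  shows "eventually_below \<eta> (\<lambda>\<zeta>. g \<zeta> = Some v)"
proof -
  have "\<exists>u. eventually_below \<eta> (\<lambda>\<zeta>. g \<zeta> = u)"
    using assms by (rule contrapos_pp) (simp add: limit_value_def)
  then obtain u where u: "eventually_below \<eta> (\<lambda>\<zeta>. g \<zeta> = u)"
    by blast
  have unique: "u' = u" if u': "eventually_below \<eta> (\<lambda>\<zeta>. g \<zeta> = u')" for u'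
  proof -
    obtain \<zeta> where "\<zeta> < \<eta>" "g \<zeta> = u' \<and> g \<zeta> = u"
      using eventually_below_conj[OF u' u] by (auto simp: eventually_below_def)
    then show ?thesis
      by metis
  qed
  have "limit_value g \<eta> = (THE u. eventually_below \<eta> (\<lambda>\<zeta>. g \<zeta> = u))"
    using u by (auto simp: limit_value_def)
  also have "\<dots> = u"
    using u unique by (rule the_equality)
  finally show ?thesis
    using u assms by simp
qed

(* C being finite, its cells of colour col at stage \<eta> all have that colour from one common
   earlier stage on *)
lemma color_count_limit_le:
  assumes "finite C" "\<xi> < \<eta>" "\<forall>d. F \<eta> d = limit_value (\<lambda>\<zeta>. F \<zeta> d) \<eta>"
    and "\<forall>\<xi><\<eta>. color_count C (F \<xi>) col \<le> n"
  shows "color_count C (F \<eta>) col \<le> n"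
proof -
  let ?S = "{d \<in> C. F \<eta> d = Some col}"
  have "eventually_below \<eta> (\<lambda>\<zeta>. \<forall>d\<in>?S. F \<zeta> d = Some col)"
    using assms(1-3) limit_value_eq_Some by (intro eventually_below_ball_finite) auto
  then obtain \<zeta> where \<zeta>: "\<zeta> < \<eta>" "\<forall>d\<in>?S. F \<zeta> d = Some col"
    by (auto simp: eventually_below_def)
  then have "?S \<subseteq> {d \<in> C. F \<zeta> d = Some col}"
    by auto
  then have "color_count C (F \<eta>) col \<le> color_count C (F \<zeta>) col"
    unfolding color_count_def using assms(1) by (intro card_mono) auto
  with \<zeta>(1) assms(4) show ?thesis
    by fastforce
qed

lemma run_color_count_le:
  assumes run: "is_run f0 \<sigma> \<theta> F" and "finite C" and "\<And>i \<alpha>. qturn i \<alpha> ` C \<subseteq> C"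
    and initial_le: "\<And>col. color_count C f0 col \<le> n" and "\<eta> \<le> \<theta>"
  shows "color_count C (F \<eta>) col \<le> n"
  using \<open>\<eta> \<le> \<theta>\<close>
proof (induction \<eta> arbitrary: col rule: less_induct)
  case (less \<eta>)
  note R = run[unfolded is_run_def]
  consider (initial) "\<forall>\<xi>. \<not> \<xi> < \<eta>"
    | (successor) \<xi> where "\<xi> < \<eta>" "\<forall>\<zeta>. \<not> (\<xi> < \<zeta> \<and> \<zeta> < \<eta>)"
    | (limit) \<xi> where "\<xi> < \<eta>" "\<forall>\<xi><\<eta>. \<exists>\<zeta>. \<xi> < \<zeta> \<and> \<zeta> < \<eta>"
    by blast
  then show ?case
  proof cases
    case initial
    then have "F \<eta> = f0"
      using R less.prems by blast
    then show ?thesis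
      using initial_le by simp
  next
    case successor
    then have twist: "\<sigma> \<xi> \<in> basic_twists" and step: "F \<eta> = act (\<sigma> \<xi>) (F \<xi>)"
      using R less.prems by auto
    have "color_count C (F \<eta>) col = color_count C (F \<xi>) col"
      unfolding step using basic_twist_permutes[OF twist assms(2,3)] by (rule color_count_act)
    with successor(1) less show ?thesis
      by simp
  next
    case limit
    then have "\<forall>d. F \<eta> d = limit_value (\<lambda>\<zeta>. F \<zeta> d) \<eta>"
      using R less.prems unfolding limit_value_def eventually_below_def by blast
    with limit(1) less show ?thesis
      by (intro color_count_limit_le[OF assms(2)]) auto
  qed
qed

lemma sum_le_bound_eq:
  fixes g :: "'a \<Rightarrow> nat"
  assumes "finite A" "\<forall>a\<in>A. g a \<le> n" "sum g A = card A * n" "a \<in> A"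
  shows "g a = n"
proof (rule ccontr)
  assume "g a \<noteq> n"
  with assms(2,4) have "sum g A < sum (\<lambda>_. n) A"
    by (intro sum_strict_mono_ex1[OF assms(1,2)]) (auto intro: le_neq_trans)
  with assms(3) show False
    by (simp add: mult.commute)
qed

theorem mainTheorem9:
  fixes \<sigma> :: "'o::wellorder \<Rightarrow> 'a point \<Rightarrow> 'a point" and \<theta> :: 'o and f :: "'a config"
  assumes "infinite (UNIV :: 'a set)"
    and "accessible_via \<sigma> \<theta> f_solved f"
    and "legal f"
  shows "\<forall>c\<in>cells. \<not> center_cell c \<longrightarrow>
           (\<forall>col. card {d \<in> cluster c. f d = Some col} = 4)"
proof (intro ballI impI allI)
  fix c :: "'a point" and col
  assume c: "c \<in> cells" "\<not> center_cell c"
  obtain F where run: "is_run f_solved \<sigma> \<theta> F" and terminal: "\<forall>c\<in>cells. F \<theta> c = f c"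
    using assms(2) by (auto simp: accessible_via_def)
  have bound: "\<forall>col'\<in>UNIV. color_count (cluster c) f col' \<le> 4"
  proof
    fix col'
    have "color_count (cluster c) f col' = color_count (cluster c) (F \<theta>) col'"
      using cluster_subset_cells[OF c(1)] terminal unfolding color_count_def
      by (intro arg_cong[where f = card]) auto
    also have "\<dots> \<le> 4"
      by (rule run_color_count_le[OF run finite_cluster qturn_image_cluster
            color_count_solved_le[OF c] order_refl])
    finally show "color_count (cluster c) f col' \<le> 4" .
  qed
  have "\<forall>d\<in>cluster c. f d \<noteq> None"
    using cluster_subset_cells[OF c(1)] assms(3) by (auto simp: legal_def)
  then have "(\<Sum>col'\<in>UNIV. color_count (cluster c) f col') = card (cluster c)"
    by (rule card_eq_sum_color_count[OF finite_cluster, symmetric])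
  also have "\<dots> = card (UNIV :: color set) * 4"
    using card_cluster[OF c] by (simp add: UNIV_color)
  finally have "color_count (cluster c) f col = 4"
    by (rule sum_le_bound_eq[OF finite_UNIV_color bound _ UNIV_I])
  then show "card {d \<in> cluster c. f d = Some col} = 4"
    by (simp add: color_count_def)
qed

end
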